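(* Let $n\ge 3$. For every initial coloring of the cycle $C_n$, the stabilization time of the Majority Model (MM) is at most $\lceil n/2\rceil-1$, and this bound is tight, i.e., there is an initial coloring of $C_n$ for which the stabilization time equals $\lceil n/2\rceil-1$.
   Context: A coloring of a graph is a map from its nodes to $\{b,w\}$. In the Majority Model (MM), all nodes update simultaneously in each round: a node adopts the color strictly more frequent among its neighbors in the previous round, and keeps its current color in case of a tie. Since MM is deterministic and there are finitely many colorings, from any initial coloring the sequence of colorings eventually enters a cycle of colorings; the stabilization time is the number of rounds needed to reach this cycle. *)

theory Defs
  imports Main
begin

(* Colour b is encoded as True, colour w as False.  A colouring of the cycle C_n
   (nodes 0,...,n-1) is a function nat => bool; only its values on {..<n} matter. *)

definition cycle_nbrs :: "nat \<Rightarrow> nat \<Rightarrow> nat set" where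
  "cycle_nbrs n i = {(i + 1) mod n, (i + n - 1) mod n}"

definition mm_step :: "nat \<Rightarrow> (nat \<Rightarrow> bool) \<Rightarrow> (nat \<Rightarrow> bool)" where
  "mm_step n c = (\<lambda>i.
     let nb = card {j \<in> cycle_nbrs n i. c j};
         nw = card {j \<in> cycle_nbrs n i. \<not> c j}
     in if nb > nw then True else if nw > nb then False else c i)"

definition mm_iter :: "nat \<Rightarrow> nat \<Rightarrow> (nat \<Rightarrow> bool) \<Rightarrow> (nat \<Rightarrow> bool)" where
  "mm_iter n t c = (mm_step n ^^ t) c"

definition col_eq :: "nat \<Rightarrow> (nat \<Rightarrow> bool) \<Rightarrow> (nat \<Rightarrow> bool) \<Rightarrow> bool" where
  "col_eq n c d \<longleftrightarrow> (\<forall>i<n. c i = d i)"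

definition on_cycle_at :: "nat \<Rightarrow> (nat \<Rightarrow> bool) \<Rightarrow> nat \<Rightarrow> bool" where
  "on_cycle_at n c t \<longleftrightarrow> (\<exists>p>0. col_eq n (mm_iter n (t + p) c) (mm_iter n t c))"

definition stab_time :: "nat \<Rightarrow> (nat \<Rightarrow> bool) \<Rightarrow> nat" where
  "stab_time n c = (LEAST t. on_cycle_at n c t)"

end

theory Submission
  imports Defs
begin

(* Call a node stable if it agrees with one of its two neighbours.  On a cycle a stable node
   never changes its colour again, while an unstable node flips.  An unstable neighbour of a
   stable node therefore flips to the colour of that node, so stability spreads by one node per
   round in both directions.  If two adjacent nodes agree, every node lies within distance
   (n - 1) div 2 of one of them, so after that many rounds all nodes are stable and the colouring
   is fixed; otherwise the colouring alternates and has period 2 from the start.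
   Conversely, a node that is unstable in round t and stable in round t + 1 has just flipped for
   the last time, so the colouring of round t is not yet on the cycle.  For the colouring with
   one agreeing pair 0, 1 followed by alternating colours, the unstable run 2, 3, ... shrinks by
   one node from each end per round, and its middle node becomes stable only in round
   (n - 1) div 2. *)

definition cyc_succ :: "nat \<Rightarrow> nat \<Rightarrow> nat" where
  "cyc_succ n i = Suc i mod n"

definition cyc_pred :: "nat \<Rightarrow> nat \<Rightarrow> nat" where
  "cyc_pred n i = (if i = 0 then n - 1 else i - 1)"

definition stable_node :: "nat \<Rightarrow> (nat \<Rightarrow> bool) \<Rightarrow> nat \<Rightarrow> bool" where
  "stable_node n c i \<longleftrightarrow> c i = c (cyc_pred n i) \<or> c i = c (cyc_succ n i)"

lemma cyc_succ_less: "i < n \<Longrightarrow> cyc_succ n i < n"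
  by (simp add: cyc_succ_def)

lemma cyc_pred_less: "i < n \<Longrightarrow> cyc_pred n i < n"
  by (auto simp: cyc_pred_def)

lemma cyc_pred_succ: "i < n \<Longrightarrow> cyc_pred n (cyc_succ n i) = i"
  by (auto simp: cyc_pred_def cyc_succ_def mod_Suc)

lemma cyc_succ_pred: "i < n \<Longrightarrow> cyc_succ n (cyc_pred n i) = i"
  by (auto simp: cyc_pred_def cyc_succ_def mod_Suc)

lemma cycle_nbrs_eq:
  assumes "i < n"
  shows "cycle_nbrs n i = {cyc_succ n i, cyc_pred n i}"
proof -
  have "(i + n - 1) mod n = cyc_pred n i"
    using assms by (cases i) (auto simp: cyc_pred_def)
  then show ?thesis
    by (simp add: cycle_nbrs_def cyc_succ_def)
qed

lemma card_filter_doubleton: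
  assumes "a \<noteq> b"
  shows "card {j \<in> {a, b}. P j} = (if P a then 1 else 0) + (if P b then 1 else 0)"
proof -
  have "{j \<in> {a, b}. P j} = (if P a then {a} else {}) \<union> (if P b then {b} else {})"
    by auto
  with assms show ?thesis
    by simp
qed

lemma mm_iter_0 [simp]: "mm_iter n 0 c = c"
  by (simp add: mm_iter_def)

lemma mm_iter_Suc: "mm_iter n (Suc t) c = mm_step n (mm_iter n t c)"
  by (simp add: mm_iter_def)

lemma mm_iter_Suc_right: "mm_iter n (Suc t) c = mm_iter n t (mm_step n c)"
  by (simp add: mm_iter_def funpow_Suc_right del: funpow.simps)

context
  fixes n :: nat
  assumes n_ge_3: "3 \<le> n"
begin

lemma cyc_succ_neq_pred: "i < n \<Longrightarrow> cyc_succ n i \<noteq> cyc_pred n i"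
  using n_ge_3 by (auto simp: cyc_pred_def cyc_succ_def mod_Suc)

lemma mm_step_cycle:
  assumes "i < n"
  shows "mm_step n c i =
    (if c (cyc_pred n i) = c (cyc_succ n i) then c (cyc_succ n i) else c i)"
  using cyc_succ_neq_pred[OF assms]
    card_filter_doubleton[of "cyc_succ n i" "cyc_pred n i" c]
    card_filter_doubleton[of "cyc_succ n i" "cyc_pred n i" "\<lambda>j. \<not> c j"]
  by (auto simp: mm_step_def Let_def cycle_nbrs_eq[OF assms])

lemma mm_step_stable_node: "i < n \<Longrightarrow> stable_node n c i \<Longrightarrow> mm_step n c i = c i"
  by (auto simp: mm_step_cycle stable_node_def)

lemma mm_step_unstable_node: "i < n \<Longrightarrow> \<not> stable_node n c i \<Longrightarrow> mm_step n c i = (\<not> c i)"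
  by (auto simp: mm_step_cycle stable_node_def)

lemma stable_node_mm_step:
  assumes i: "i < n" and stable: "stable_node n c i"
  shows "stable_node n (mm_step n c) i"
proof -
  obtain j where j: "j = cyc_pred n i \<or> j = cyc_succ n i" "c j = c i"
    using stable by (auto simp: stable_node_def)
  then have "j < n" "stable_node n c j"
    using i cyc_pred_less cyc_succ_less cyc_succ_pred cyc_pred_succ by (auto simp: stable_node_def)
  then have "mm_step n c j = mm_step n c i"
    using j(2) mm_step_stable_node[OF i stable] mm_step_stable_node by simp
  with j(1) show ?thesis
    by (auto simp: stable_node_def)
qed

lemma stable_node_mm_step_adjacent:
  assumes i: "i < n" and j: "j < n" and "stable_node n c j"
    and adj: "j = cyc_pred n i \<or> j = cyc_succ n i"
  shows "stable_node n (mm_step n c) i"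
proof (cases "stable_node n c i")
  case True
  then show ?thesis by (rule stable_node_mm_step[OF i])
next
  case False
  then have "c i \<noteq> c j"
    using adj by (auto simp: stable_node_def)
  with False adj show ?thesis
    using mm_step_unstable_node[OF i False] mm_step_stable_node[OF j \<open>stable_node n c j\<close>]
    by (auto simp: stable_node_def)
qed

lemma unstable_node_mm_step:
  assumes i: "i < n" and "\<not> stable_node n c i" "\<not> stable_node n c (cyc_pred n i)"
    "\<not> stable_node n c (cyc_succ n i)"
  shows "\<not> stable_node n (mm_step n c) i"
proof -
  have "mm_step n c i = (\<not> c i)" "mm_step n c (cyc_pred n i) = (\<not> c (cyc_pred n i))"
    "mm_step n c (cyc_succ n i) = (\<not> c (cyc_succ n i))"
    using assms cyc_pred_less[OF i] cyc_succ_less[OF i] by (simp_all add: mm_step_unstable_node)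
  with assms(2) show ?thesis
    by (auto simp: stable_node_def)
qed

lemma stable_node_mm_iter:
  "i < n \<Longrightarrow> stable_node n (mm_iter n t c) i \<Longrightarrow>
    stable_node n (mm_iter n (t + m) c) i \<and> mm_iter n (t + m) c i = mm_iter n t c i"
  by (induction m) (simp_all add: mm_iter_Suc stable_node_mm_step mm_step_stable_node)

lemma stable_node_spreads_forward:
  "j < n \<Longrightarrow> stable_node n c j \<Longrightarrow> stable_node n (mm_iter n d c) ((j + d) mod n)"
proof (induction d)
  case (Suc d)
  have "(j + Suc d) mod n = cyc_succ n ((j + d) mod n)"
    by (simp add: cyc_succ_def mod_Suc_eq)
  with Suc stable_node_mm_step_adjacent[of _ "(j + d) mod n"] n_ge_3 show ?case
    by (simp add: mm_iter_Suc cyc_succ_less cyc_pred_succ)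
qed simp

lemma stable_node_spreads_backward:
  "k < n \<Longrightarrow> (k + d) mod n = j \<Longrightarrow> stable_node n c j \<Longrightarrow> stable_node n (mm_iter n d c) k"
proof (induction d arbitrary: k)
  case (Suc d)
  have "(cyc_succ n k + d) mod n = j"
    using Suc.prems(2) by (simp add: cyc_succ_def mod_add_left_eq)
  with Suc have "stable_node n (mm_iter n d c) (cyc_succ n k)"
    by (simp add: cyc_succ_less)
  with Suc.prems(1) show ?case
    using stable_node_mm_step_adjacent[of k "cyc_succ n k"]
    by (simp add: mm_iter_Suc cyc_succ_less)
qed simp

lemma cycle_distance_split:
  assumes "j < n" "i < n"
  obtains d e where "d + e = n - 1" "(Suc j + d) mod n = i" "(i + e) mod n = j"
proof (cases "j < i")
  case True
  have "(i + (n - 1 - (i - Suc j))) mod n = (j + n) mod n"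
    using True assms by (simp add: algebra_simps)
  with True assms show ?thesis
    by (intro that[of "i - Suc j" "n - 1 - (i - Suc j)"]) auto
next
  case False
  have "(Suc j + (n - 1 - j + i)) mod n = (i + n) mod n"
    using False assms by simp
  with False assms show ?thesis
    by (intro that[of "n - 1 - j + i" "j - i"]) auto
qed

lemma all_stable_after_half:
  assumes j: "j < n" and agree: "c j = c (cyc_succ n j)" and i: "i < n"
  shows "stable_node n (mm_iter n ((n - 1) div 2) c) i"
proof -
  let ?T = "(n - 1) div 2"
  have "stable_node n c j" "stable_node n c (cyc_succ n j)"
    using agree cyc_pred_succ[OF j] by (auto simp: stable_node_def)
  obtain d e where de: "d + e = n - 1" "(Suc j + d) mod n = i" "(i + e) mod n = j"
    using cycle_distance_split[OF j i] .
  have "(cyc_succ n j + d) mod n = i"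
    using de(2) by (simp add: cyc_succ_def mod_add_left_eq)
  then have fwd: "stable_node n (mm_iter n d c) i"
    using stable_node_spreads_forward[OF cyc_succ_less[OF j] \<open>stable_node n c (cyc_succ n j)\<close>]
    by metis
  have bwd: "stable_node n (mm_iter n e c) i"
    using stable_node_spreads_backward[OF i de(3) \<open>stable_node n c j\<close>] .
  show ?thesis
  proof (cases "d \<le> ?T")
    case True
    then show ?thesis using stable_node_mm_iter[OF i fwd, of "?T - d"] by simp
  next
    case False
    then have "e \<le> ?T" using de(1) by linarith
    then show ?thesis using stable_node_mm_iter[OF i bwd, of "?T - e"] by simp
  qed
qed

lemma on_cycle_at_if_all_stable:
  "(\<And>i. i < n \<Longrightarrow> stable_node n (mm_iter n t c) i) \<Longrightarrow> on_cycle_at n c t"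
  unfolding on_cycle_at_def col_eq_def
  by (intro exI[of _ 1]) (simp add: mm_iter_Suc mm_step_stable_node)

lemma on_cycle_at_if_all_unstable:
  assumes unst: "\<And>i. i < n \<Longrightarrow> \<not> stable_node n c i"
  shows "on_cycle_at n c 0"
proof -
  have unst': "\<not> stable_node n (mm_step n c) i" if "i < n" for i
    using that unst cyc_pred_less cyc_succ_less by (intro unstable_node_mm_step) auto
  have "col_eq n (mm_iter n (Suc (Suc 0)) c) c"
    using mm_step_unstable_node[OF _ unst] mm_step_unstable_node[OF _ unst']
    by (simp add: col_eq_def mm_iter_Suc)
  then show ?thesis
    unfolding on_cycle_at_def by (intro exI[of _ "Suc (Suc 0)"]) simp
qed

lemma on_cycle_within_half: "\<exists>t \<le> (n - 1) div 2. on_cycle_at n c t"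
proof (cases "\<exists>j<n. c j = c (cyc_succ n j)")
  case True
  then obtain j where "j < n" "c j = c (cyc_succ n j)" by blast
  then have "on_cycle_at n c ((n - 1) div 2)"
    by (intro on_cycle_at_if_all_stable all_stable_after_half)
  then show ?thesis by blast
next
  case False
  then have "\<not> stable_node n c i" if "i < n" for i
    using that cyc_pred_less[OF that] cyc_succ_pred[OF that] by (auto simp: stable_node_def)
  then show ?thesis
    using on_cycle_at_if_all_unstable by blast
qed

lemma stab_time_le_half: "stab_time n c \<le> (n - 1) div 2"
proof -
  obtain t where t: "t \<le> (n - 1) div 2" "on_cycle_at n c t"
    using on_cycle_within_half by blast
  have "stab_time n c \<le> t"
    unfolding stab_time_def using t(2) by (rule Least_le)
  then show ?thesis
    using t(1) by (rule le_trans)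
qed

lemma not_on_cycle_at_if_becomes_stable:
  assumes i: "i < n" and "\<not> stable_node n (mm_iter n t c) i"
    and stable: "stable_node n (mm_iter n (Suc t) c) i"
  shows "\<not> on_cycle_at n c t"
proof
  assume "on_cycle_at n c t"
  then obtain p where "p > 0" and period: "col_eq n (mm_iter n (t + p) c) (mm_iter n t c)"
    unfolding on_cycle_at_def by blast
  then have "mm_iter n (t + p) c i = mm_iter n (Suc t) c i"
    using stable_node_mm_iter[OF i stable, of "p - 1"] by simp
  moreover have "mm_iter n (Suc t) c i = (\<not> mm_iter n t c i)"
    using mm_step_unstable_node[OF i \<open>\<not> stable_node n (mm_iter n t c) i\<close>]
    by (simp add: mm_iter_Suc)
  ultimately show False
    using period i by (auto simp: col_eq_def)
qed

lemma unstable_interval_mm_iter: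
  "b < n \<Longrightarrow> (\<And>k. a \<le> k \<Longrightarrow> k \<le> b \<Longrightarrow> \<not> stable_node n c k) \<Longrightarrow>
    a + r \<le> k \<Longrightarrow> k + r \<le> b \<Longrightarrow> \<not> stable_node n (mm_iter n r c) k"
proof (induction r arbitrary: c a b)
  case (Suc r)
  have "\<not> stable_node n (mm_step n c) k" if "Suc a \<le> k" "k \<le> b - 1" for k
  proof -
    have "cyc_pred n k = k - 1" "cyc_succ n k = k + 1"
      using that Suc.prems(1) by (auto simp: cyc_pred_def cyc_succ_def)
    with that Suc.prems(1,2) show ?thesis
      by (intro unstable_node_mm_step) auto
  qed
  with Suc.IH[where b = "b - 1" and c = "mm_step n c" and a = "Suc a"] Suc.prems(1,3,4) show ?case
    by (simp add: mm_iter_Suc_right)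
qed simp

end

definition slow_coloring :: "nat \<Rightarrow> bool" where
  "slow_coloring i \<longleftrightarrow> i = 0 \<or> odd i"

lemma slow_coloring_stable_1: "stable_node n slow_coloring 1"
  by (simp add: stable_node_def slow_coloring_def cyc_pred_def)

lemma slow_coloring_unstable:
  assumes "2 \<le> k" "k < n" "k = n - 1 \<Longrightarrow> odd n"
  shows "\<not> stable_node n slow_coloring k"
proof -
  have "cyc_pred n k = k - 1" using assms by (simp add: cyc_pred_def)
  moreover have "cyc_succ n k = (if k = n - 1 then 0 else k + 1)"
    using assms by (auto simp: cyc_succ_def)
  ultimately show ?thesis
    using assms by (auto simp: stable_node_def slow_coloring_def)
qed

lemma slow_coloring_not_on_cycle:
  assumes n: "3 \<le> n" and t: "t < (n - 1) div 2"
  shows "\<not> on_cycle_at n slow_coloring t"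
proof -
  (* the unstable run is 2, ..., b; for even n node n - 1 agrees with node 0 *)
  define b where "b = (if even n then n - 2 else n - 1)"
  have "b < n"
    using n by (simp add: b_def)
  have "t + 2 < n"
    using t by linarith
  have "2 * t + 2 \<le> b"
  proof (cases "even n")
    case True
    with t show ?thesis by (simp add: b_def) presburger
  next
    case False
    with t show ?thesis by (simp add: b_def)
  qed
  have unstable_run: "\<not> stable_node n slow_coloring k" if k: "2 \<le> k" "k \<le> b" for k
  proof (rule slow_coloring_unstable)
    show "2 \<le> k" "k < n"
      using k \<open>b < n\<close> by simp_all
    show "odd n" if "k = n - 1"
      using that k n by (cases "even n") (simp_all add: b_def)
  qed
  have "\<not> stable_node n (mm_iter n t slow_coloring) (t + 2)"
    using \<open>2 * t + 2 \<le> b\<close>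
    by (intro unstable_interval_mm_iter[where a = 2, OF n \<open>b < n\<close> unstable_run]) simp_all
  moreover have "stable_node n (mm_iter n (Suc t) slow_coloring) (t + 2)"
  proof -
    have "stable_node n (mm_iter n (Suc t) slow_coloring) ((1 + Suc t) mod n)"
      using n by (intro stable_node_spreads_forward[OF n _ slow_coloring_stable_1]) simp
    moreover have "(1 + Suc t) mod n = t + 2"
      using \<open>t + 2 < n\<close> by simp
    ultimately show ?thesis
      by simp
  qed
  ultimately show ?thesis
    by (rule not_on_cycle_at_if_becomes_stable[OF n \<open>t + 2 < n\<close>])
qed

theorem theorem2p3:
  fixes n :: nat
  assumes "n \<ge> 3"
  shows "(\<forall>c. stab_time n c \<le> (n + 1) div 2 - 1)
       \<and> (\<exists>c. stab_time n c = (n + 1) div 2 - 1)"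
proof -
  have "(n - 1) div 2 \<le> stab_time n slow_coloring"
    unfolding stab_time_def
  proof (rule LeastI2_ex)
    show "\<exists>t. on_cycle_at n slow_coloring t"
      using on_cycle_within_half[OF assms] by blast
    show "(n - 1) div 2 \<le> t" if "on_cycle_at n slow_coloring t" for t
      using that slow_coloring_not_on_cycle[OF assms, of t] by (rule contrapos_pp) simp
  qed
  then have "stab_time n slow_coloring = (n - 1) div 2"
    by (rule antisym[OF stab_time_le_half[OF assms]])
  moreover have "(n + 1) div 2 - 1 = (n - 1) div 2"
    by linarith
  ultimately show ?thesis
    using stab_time_le_half[OF assms] by auto
qed

end
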